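(* Let $s\ge 1$, $q=4^{2s}$, and let $\theta$ be the automorphism of $F_q$ given by $\theta(a)=a^{4^s}$. Let $n$ be odd and suppose $x^n-1=h(x)g(x)$ in $F_q[x;\theta]$. Then the skew cyclic code $C=\langle g(x)\rangle$ of length $n$ over $F_q$ is a reversible DNA code if and only if $g(x)$ is a palindromic polynomial.
   Context: $F_q[x;\theta]$ is the skew polynomial ring: polynomials $\sum a_ix^i$ with $a_i\in F_q$, usual addition, and multiplication determined by $xa=\theta(a)x$ for $a\in F_q$. A skew cyclic code of length $n$ is a linear code $C\subseteq F_q^n$ such that $(\theta(c_{n-1}),\theta(c_0),\ldots,\theta(c_{n-2}))\in C$ whenever $(c_0,\ldots,c_{n-1})\in C$; identifying $(c_0,\ldots,c_{n-1})$ with $c_0+c_1x+\dots+c_{n-1}x^{n-1}$, such codes are left $F_q[x;\theta]$-submodules of $F_q[x;\theta]/(x^n-1)$, and $\langle g(x)\rangle$ denotes the left submodule generated by $g(x)$. A polynomial $f(x)=a_0+\dots+a_tx^t$ of degree $t$ is palindromic if $a_i=a_{t-i}$ for all $i$. DNA correspondence: there is a fixed bijection $\tau:F_{4^{2s}}\to\{A,T,G,C\}^{2s}$ such that for every $\beta$, $\tau(\beta^{4^s})$ is the reverse of the string $\tau(\beta)$; it extends to $\phi:F_q^n\to\{A,T,G,C\}^{2sn}$ by concatenation. A code $C\subseteq F_q^n$ is a reversible DNA code if the reverse string $\phi(c)^r$ lies in $\phi(C)$ for all $c\in C$; equivalently, $(\theta(c_{n-1}),\ldots,\theta(c_1),\theta(c_0))\in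 C$ for every $(c_0,\ldots,c_{n-1})\in C$. *)

theory Defs
  imports "HOL-Computational_Algebra.Polynomial"
begin

text \<open>Skew polynomials F[x;th] are represented by ordinary coefficient sequences
  (type 'a poly); only the multiplication differs: x * a = th(a) * x.\<close>

definition skew_mult :: "('a::field \<Rightarrow> 'a) \<Rightarrow> 'a poly \<Rightarrow> 'a poly \<Rightarrow> 'a poly" where
  "skew_mult th p q =
     (\<Sum>i\<le>degree p. \<Sum>j\<le>degree q. monom (coeff p i * (th ^^ i) (coeff q j)) (i + j))"

text \<open>Remainder of right division by m (p = Q*m + r with deg r < deg m);
  this gives the canonical representative of p in the left module F[x;th]/F[x;th](x^n-1).\<close>

definition skew_rem :: "('a::field \<Rightarrow> 'a) \<Rightarrow> 'a poly \<Rightarrow> 'a poly \<Rightarrow> 'a poly" where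
  "skew_rem th p m =
     (THE r. (r = 0 \<or> degree r < degree m) \<and> (\<exists>Q. p = skew_mult th Q m + r))"

definition vec_of :: "nat \<Rightarrow> 'a::zero poly \<Rightarrow> 'a list" where
  "vec_of n r = map (coeff r) [0..<n]"

text \<open>The skew cyclic code <g> of length n: the left submodule of
  F[x;th]/(x^n-1) generated by g, as a set of vectors in F^n.\<close>

definition skew_code :: "('a::field \<Rightarrow> 'a) \<Rightarrow> nat \<Rightarrow> 'a poly \<Rightarrow> 'a list set" where
  "skew_code th n g =
     {vec_of n (skew_rem th (skew_mult th f g) (monom 1 n - 1)) | f. True}"

definition palindromic :: "'a::zero poly \<Rightarrow> bool" where
  "palindromic f \<longleftrightarrow> (\<forall>i\<le>degree f. coeff f i = coeff f (degree f - i))"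

datatype nucleotide = nA | nT | nG | nC

definition dna_phi :: "('a \<Rightarrow> nucleotide list) \<Rightarrow> 'a list \<Rightarrow> nucleotide list" where
  "dna_phi tau c = concat (map tau c)"

definition reversible_DNA_code :: "('a \<Rightarrow> nucleotide list) \<Rightarrow> 'a list set \<Rightarrow> bool" where
  "reversible_DNA_code tau Cd \<longleftrightarrow> (\<forall>c\<in>Cd. rev (dna_phi tau c) \<in> dna_phi tau ` Cd)"

end

theory Submission
  imports Defs "HOL-Computational_Algebra.Primes"
begin

text \<open>
  The automorphism \<open>\<theta>(a) = a^(4^s)\<close> of the field with \<open>4^(2s)\<close> elements is an involution, so for
  odd \<open>n\<close> we have \<open>x^n b = \<theta>(b) x^n\<close>. From \<open>x^n - 1 = h g\<close> it follows that
  \<open>\<theta>(g) (x^n - 1) = x^n g - \<theta>(g)\<close>, so \<open>\<theta>(g)\<close> is a left multiple of \<open>g\<close> of the same degree,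
  i.e. \<open>\<theta>(g) = b g\<close> for a scalar \<open>b\<close>. The code \<open>\<langle>g\<rangle>\<close> consists of the left multiples of \<open>g\<close>
  of degree \<open>< n\<close>, and since the DNA map is injective, reversibility means closure under
  \<open>c \<mapsto> \<theta>(c\<^sup>r)\<close>, where \<open>c\<^sup>r\<close> reverses the coefficient vector of length \<open>n\<close>.

  If \<open>g\<close> is palindromic, the \<open>\<theta>\<close>-reversal of \<open>x^j g\<close> is a scalar multiple of
  \<open>x^(n-1-j-deg g) g\<close>, and closure follows by additivity. Conversely, if \<open>deg g < n\<close>, the
  \<open>\<theta>\<close>-reversal of \<open>x^(n-1-deg g) g\<close> is a code word of degree at most \<open>deg g\<close>, hence a
  scalar multiple of \<open>g\<close>: the reversed coefficient sequence of \<open>g\<close> is \<open>e\<close> times the original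
  one, and \<open>e\<^sup>2 = 1\<close> forces \<open>e = 1\<close> in characteristic 2. If \<open>deg g = n\<close>, then \<open>g\<close> is a
  multiple of \<open>x^n - 1 = x^n + 1\<close>.
\<close>

section \<open>Finite fields and ordinary polynomials\<close>

lemma power_card_eq_self:
  fixes a :: "'a::{field,finite}"
  shows "a ^ card (UNIV :: 'a set) = a"
proof (cases "a = 0")
  case False
  define S where "S = UNIV - {0::'a}"
  have "(\<Prod>x\<in>S. a * x) = (\<Prod>x\<in>S. x)"
    unfolding S_def
    by (rule prod.reindex_bij_witness[of _ "\<lambda>y. y / a" "\<lambda>y. a * y"]) (use False in auto)
  moreover have "(\<Prod>x\<in>S. a * x) = a ^ card S * (\<Prod>x\<in>S. x)"
    by (simp add: prod.distrib)
  moreover have "(\<Prod>x\<in>S. x) \<noteq> 0"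
    unfolding S_def by simp
  ultimately have "a ^ card S = 1"
    by (metis mult_cancel_right2)
  moreover have "card (UNIV :: 'a set) = Suc (card S)"
    using finite_UNIV_card_ge_0[where 'a='a] unfolding S_def by (simp add: card_Diff_singleton)
  ultimately show ?thesis by simp
qed (use finite_UNIV_card_ge_0[where 'a='a] in auto)

lemma of_nat_card_eq_0: "of_nat (card (UNIV :: 'a::{field,finite} set)) = (0::'a)"
proof -
  have "(\<Sum>x\<in>(UNIV::'a set). x + 1) = (\<Sum>x\<in>UNIV. x)"
    by (rule sum.reindex_bij_witness[of _ "\<lambda>x. x - 1" "\<lambda>x. x + 1"]) auto
  then show ?thesis by (simp add: sum.distrib)
qed

lemma CHAR_eq_2_if_card_power_2:
  assumes "card (UNIV :: 'a::{field,finite} set) = 2 ^ k"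
  shows "CHAR('a) = 2"
proof -
  have "prime CHAR('a)"
    by (intro prime_CHAR_semidom finite_imp_CHAR_pos) simp
  moreover have "CHAR('a) dvd 2 ^ k"
    using of_nat_card_eq_0[where 'a='a] assms of_nat_eq_0_iff_char_dvd by metis
  ultimately show ?thesis
    by (metis prime_dvd_power primes_dvd_imp_eq two_is_prime_nat)
qed

lemma degree_monom_1_minus_1:
  assumes "n \<ge> 1"
  shows "degree (monom (1::'a::idom) n - 1) = n"
proof (rule antisym)
  show "degree (monom (1::'a) n - 1) \<le> n"
    by (rule degree_le) (auto simp: coeff_monom)
  show "n \<le> degree (monom (1::'a) n - 1)"
    by (rule le_degree) (use assms in \<open>simp add: coeff_monom\<close>)
qed

lemma palindromic_smult:
  assumes "palindromic p"
  shows "palindromic (smult (c::'a::idom) p)"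
proof (cases "c = 0")
  case False
  then show ?thesis
    using assms unfolding palindromic_def by (metis coeff_smult degree_smult_eq)
qed (simp add: palindromic_def)

lemma palindromic_monom_1_minus_1:
  assumes "CHAR('a::idom) = 2" "n \<ge> 1"
  shows "palindromic (monom (1::'a) n - 1)"
  unfolding palindromic_def degree_monom_1_minus_1[OF assms(2)]
proof (intro allI impI)
  fix i assume "i \<le> n"
  have "(-1::'a) = 1" by (rule uminus_CHAR_2[OF assms(1)])
  then show "coeff (monom (1::'a) n - 1) i = coeff (monom 1 n - 1) (n - i)"
    using assms(2) \<open>i \<le> n\<close> by (cases "i = 0"; cases "i = n") (simp_all add: coeff_monom)
qed

lemma palindromicI_CHAR_2:
  fixes g :: "'a::idom poly"
  assumes "CHAR('a) = 2" and "g \<noteq> 0"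
    and reflect: "\<And>m. m \<le> degree g \<Longrightarrow> coeff g (degree g - m) = e * coeff g m"
  shows "palindromic g"
proof -
  have "lead_coeff g = e * coeff g 0" and "coeff g 0 = e * lead_coeff g"
    using reflect[of 0] reflect[of "degree g"] by simp_all
  then have "(e * e) * lead_coeff g = 1 * lead_coeff g"
    by (simp add: mult.assoc)
  then have "e * e = 1"
    using \<open>g \<noteq> 0\<close> by (simp only: mult_cancel_right) simp
  moreover have "(2::'a) = 0"
    using of_nat_CHAR[where 'a='a] assms(1) by simp
  ultimately have "(e + 1) * (e + 1) = 0"
    by (simp add: algebra_simps mult_2_right[symmetric])
  then have "e = 1"
    using uminus_CHAR_2[OF assms(1), of e] by (simp add: add_eq_0_iff)
  then show ?thesis
    unfolding palindromic_def using reflect by simp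
qed

lemma nth_vec_of: "i < n \<Longrightarrow> vec_of n p ! i = coeff p i"
  by (simp add: vec_of_def)

lemma inj_on_vec_of: "inj_on (vec_of n) {p. degree p < n}"
proof (rule inj_onI, rule poly_eqI)
  fix p q i assume "p \<in> {p. degree p < n}" "q \<in> {p. degree p < n}" "vec_of n p = vec_of n q"
  then show "coeff p i = coeff q i"
    by (cases "i < n") (metis nth_vec_of, simp add: coeff_eq_0)
qed

section \<open>Skew polynomials\<close>

locale skew_poly_ring =
  fixes th :: "'a::field \<Rightarrow> 'a"
  assumes th_add: "th (a + b) = th a + th b"
    and th_mult: "th (a * b) = th a * th b"
    and th_1 [simp]: "th 1 = 1"
begin

abbreviation skew_times :: "'a poly \<Rightarrow> 'a poly \<Rightarrow> 'a poly"  (infixl \<open>\<star>\<close> 70)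
  where "p \<star> q \<equiv> skew_mult th p q"

lemma th_0 [simp]: "th 0 = 0"
  using th_add[of 0 0] by (metis add_cancel_right_right)

lemma th_eq_0_iff [simp]: "th a = 0 \<longleftrightarrow> a = 0"
proof
  assume "th a = 0"
  show "a = 0"
  proof (rule ccontr)
    assume "a \<noteq> 0"
    then have "th a * th (inverse a) = 1"
      by (simp flip: th_mult)
    with \<open>th a = 0\<close> show False by simp
  qed
qed simp

lemma funpow_th_add: "(th ^^ i) (a + b) = (th ^^ i) a + (th ^^ i) b"
  by (induction i) (simp_all add: th_add)

lemma funpow_th_mult: "(th ^^ i) (a * b) = (th ^^ i) a * (th ^^ i) b"
  by (induction i) (simp_all add: th_mult)

lemma funpow_th_0 [simp]: "(th ^^ i) 0 = 0"
  by (induction i) simp_all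

lemma funpow_th_1 [simp]: "(th ^^ i) 1 = 1"
  by (induction i) simp_all

lemma funpow_th_eq_0_iff [simp]: "(th ^^ i) a = 0 \<longleftrightarrow> a = 0"
  by (induction i) simp_all

lemma coeff_skew_mult: "coeff (p \<star> q) m = (\<Sum>i\<le>m. coeff p i * (th ^^ i) (coeff q (m - i)))"
proof -
  have inner: "(\<Sum>j\<le>degree q. if i + j = m then coeff p i * (th ^^ i) (coeff q j) else 0)
      = (if i \<le> m then coeff p i * (th ^^ i) (coeff q (m - i)) else 0)" for i
  proof (cases "i \<le> m \<and> m - i \<le> degree q")
    case True
    then have "(\<Sum>j\<le>degree q. if i + j = m then coeff p i * (th ^^ i) (coeff q j) else 0)
        = (\<Sum>j\<le>degree q. if j = m - i then coeff p i * (th ^^ i) (coeff q j) else 0)"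
      by (intro sum.cong) auto
    then show ?thesis using True by simp
  next
    case False
    then have "(\<Sum>j\<le>degree q. if i + j = m then coeff p i * (th ^^ i) (coeff q j) else 0) = 0"
      by (intro sum.neutral) auto
    then show ?thesis using False by (auto simp: coeff_eq_0)
  qed
  have "coeff (p \<star> q) m
      = (\<Sum>i\<le>degree p. if i \<le> m then coeff p i * (th ^^ i) (coeff q (m - i)) else 0)"
    by (simp add: skew_mult_def coeff_sum coeff_monom inner)
  also have "\<dots> = (\<Sum>i\<le>max (degree p) m. if i \<le> m then coeff p i * (th ^^ i) (coeff q (m - i)) else 0)"
    by (rule sum.mono_neutral_left) (auto simp: coeff_eq_0)
  also have "\<dots> = (\<Sum>i\<le>m. coeff p i * (th ^^ i) (coeff q (m - i)))"
    by (rule sum.mono_neutral_cong_right) auto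
  finally show ?thesis .
qed

lemma skew_mult_add_left: "(p + q) \<star> r = p \<star> r + q \<star> r"
  by (rule poly_eqI) (simp add: coeff_skew_mult algebra_simps sum.distrib)

lemma skew_mult_add_right: "p \<star> (q + r) = p \<star> q + p \<star> r"
  by (rule poly_eqI) (simp add: coeff_skew_mult algebra_simps sum.distrib funpow_th_add)

lemma skew_mult_0_left [simp]: "0 \<star> r = 0"
  by (rule poly_eqI) (simp add: coeff_skew_mult)

lemma skew_mult_0_right [simp]: "p \<star> 0 = 0"
  by (rule poly_eqI) (simp add: coeff_skew_mult)

lemma skew_mult_diff_left: "(p - q) \<star> r = p \<star> r - q \<star> r"
  using skew_mult_add_left[of "p - q" q r] by (simp add: eq_diff_eq)

lemma skew_mult_diff_right: "p \<star> (q - r) = p \<star> q - p \<star> r"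
  using skew_mult_add_right[of p "q - r" r] by (simp add: eq_diff_eq)

lemma skew_mult_sum_left: "(\<Sum>x\<in>S. f x) \<star> r = (\<Sum>x\<in>S. f x \<star> r)"
  by (induction S rule: infinite_finite_induct) (simp_all add: skew_mult_add_left)

lemma skew_mult_sum_right: "p \<star> (\<Sum>x\<in>S. f x) = (\<Sum>x\<in>S. p \<star> f x)"
  by (induction S rule: infinite_finite_induct) (simp_all add: skew_mult_add_right)

lemma coeff_monom_skew_mult:
  "coeff (monom a e \<star> r) m = (if e \<le> m then a * (th ^^ e) (coeff r (m - e)) else 0)"
proof -
  have "coeff (monom a e \<star> r) m = (\<Sum>i\<le>m. if i = e then a * (th ^^ i) (coeff r (m - i)) else 0)"
    unfolding coeff_skew_mult by (intro sum.cong) (auto simp: coeff_monom)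
  then show ?thesis by simp
qed

lemma monom_skew_mult_monom: "monom a i \<star> monom b j = monom (a * (th ^^ i) b) (i + j)"
  by (rule poly_eqI) (auto simp: coeff_monom_skew_mult coeff_monom)

lemma const_skew_mult: "[:a:] \<star> q = smult a q"
  by (rule poly_eqI) (simp add: coeff_monom_skew_mult flip: monom_0)

lemma coeff_skew_mult_monom_1:
  "coeff (p \<star> monom 1 n) m = (if n \<le> m then coeff p (m - n) else 0)"
proof -
  have "coeff (p \<star> monom 1 n) m = (\<Sum>i\<le>m. if i = m - n \<and> n \<le> m then coeff p i else 0)"
    unfolding coeff_skew_mult by (intro sum.cong) (auto simp: coeff_monom)
  then show ?thesis by simp
qed

lemma skew_mult_1_right [simp]: "p \<star> 1 = p"
proof (rule poly_eqI)
  fix m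
  have "coeff (p \<star> 1) m = (\<Sum>i\<le>m. if i = m then coeff p i else 0)"
    unfolding coeff_skew_mult by (intro sum.cong) (auto simp: coeff_1)
  then show "coeff (p \<star> 1) m = coeff p m" by simp
qed


lemma coeff_skew_mult_degree:
  "coeff (p \<star> q) (degree p + degree q) = lead_coeff p * (th ^^ degree p) (lead_coeff q)"
proof -
  have "coeff (p \<star> q) (degree p + degree q)
      = (\<Sum>i\<le>degree p + degree q. if i = degree p then lead_coeff p * (th ^^ degree p) (lead_coeff q) else 0)"
    unfolding coeff_skew_mult
  proof (intro sum.cong refl)
    fix i assume "i \<in> {..degree p + degree q}"
    then have "i = degree p \<or> i > degree p \<or> degree p + degree q - i > degree q"
      by auto
    then show "coeff p i * (th ^^ i) (coeff q (degree p + degree q - i))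
        = (if i = degree p then lead_coeff p * (th ^^ degree p) (lead_coeff q) else 0)"
      by (auto simp: coeff_eq_0)
  qed
  then show ?thesis by simp
qed

lemma degree_skew_mult_le: "degree (p \<star> q) \<le> degree p + degree q"
proof (rule degree_le, intro allI impI)
  fix m assume "degree p + degree q < m"
  then have "coeff p i * (th ^^ i) (coeff q (m - i)) = 0" for i
    by (cases "i > degree p") (simp_all add: coeff_eq_0)
  then show "coeff (p \<star> q) m = 0"
    unfolding coeff_skew_mult by (intro sum.neutral ballI)
qed

lemma degree_skew_mult:
  assumes "p \<noteq> 0" "q \<noteq> 0"
  shows "degree (p \<star> q) = degree p + degree q"
proof (rule antisym)
  show "degree (p \<star> q) \<le> degree p + degree q"
    by (rule degree_skew_mult_le)
  show "degree p + degree q \<le> degree (p \<star> q)"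
    by (rule le_degree) (use assms in \<open>simp add: coeff_skew_mult_degree\<close>)
qed

lemma skew_mult_eq_0_iff: "p \<star> q = 0 \<longleftrightarrow> p = 0 \<or> q = 0"
proof
  assume "p \<star> q = 0"
  then have "lead_coeff p * (th ^^ degree p) (lead_coeff q) = 0"
    by (metis coeff_0 coeff_skew_mult_degree)
  then show "p = 0 \<or> q = 0" by simp
qed auto

lemma skew_mult_assoc: "(p \<star> q) \<star> r = p \<star> (q \<star> r)"
proof -
  have monom_assoc: "(monom a i \<star> monom b j) \<star> monom c l = monom a i \<star> (monom b j \<star> monom c l)"
    for a b c i j l
    by (simp add: monom_skew_mult_monom funpow_th_mult funpow_add algebra_simps)
  have sum3: "(\<Sum>i\<in>A. \<Sum>j\<in>B. \<Sum>l\<in>C. F i j l) = (\<Sum>l\<in>C. \<Sum>j\<in>B. \<Sum>i\<in>A. F i j l)"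
    for A B C and F :: "nat \<Rightarrow> nat \<Rightarrow> nat \<Rightarrow> 'a poly"
  proof -
    have "(\<Sum>i\<in>A. \<Sum>j\<in>B. \<Sum>l\<in>C. F i j l) = (\<Sum>i\<in>A. \<Sum>l\<in>C. \<Sum>j\<in>B. F i j l)"
      by (intro sum.cong refl sum.swap)
    also have "\<dots> = (\<Sum>l\<in>C. \<Sum>i\<in>A. \<Sum>j\<in>B. F i j l)"
      by (rule sum.swap)
    also have "\<dots> = (\<Sum>l\<in>C. \<Sum>j\<in>B. \<Sum>i\<in>A. F i j l)"
      by (intro sum.cong refl sum.swap)
    finally show ?thesis .
  qed
  let ?P = "\<lambda>i. monom (coeff p i) i" and ?Q = "\<lambda>j. monom (coeff q j) j"
    and ?R = "\<lambda>l. monom (coeff r l) l"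
  have "(p \<star> q) \<star> r = ((\<Sum>i\<le>degree p. ?P i) \<star> (\<Sum>j\<le>degree q. ?Q j)) \<star> (\<Sum>l\<le>degree r. ?R l)"
    by (simp only: poly_as_sum_of_monoms)
  also have "\<dots> = (\<Sum>i\<le>degree p. \<Sum>j\<le>degree q. \<Sum>l\<le>degree r. (?P i \<star> ?Q j) \<star> ?R l)"
    unfolding skew_mult_sum_left skew_mult_sum_right by (rule sum3[symmetric])
  also have "\<dots> = (\<Sum>i\<le>degree p. \<Sum>j\<le>degree q. \<Sum>l\<le>degree r. ?P i \<star> (?Q j \<star> ?R l))"
    by (simp only: monom_assoc)
  also have "\<dots> = (\<Sum>i\<le>degree p. ?P i) \<star> ((\<Sum>j\<le>degree q. ?Q j) \<star> (\<Sum>l\<le>degree r. ?R l))"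
    unfolding skew_mult_sum_left skew_mult_sum_right by (rule sum3)
  finally show ?thesis by (simp only: poly_as_sum_of_monoms)
qed

lemma skew_division:
  assumes "m \<noteq> 0"
  shows "\<exists>Q r. p = Q \<star> m + r \<and> (r = 0 \<or> degree r < degree m)"
proof (induction "degree p" arbitrary: p rule: less_induct)
  case less
  show ?case
  proof (cases "p = 0 \<or> degree p < degree m")
    case True
    then show ?thesis by (intro exI[of _ 0] exI[of _ p]) auto
  next
    case False
    define e where "e = degree p - degree m"
    define c where "c = lead_coeff p / (th ^^ e) (lead_coeff m)"
    define p' where "p' = p - monom c e \<star> m"
    have "c \<noteq> 0" "degree p = e + degree m"
      using False assms by (auto simp: c_def e_def)
    then have deg: "degree (monom c e \<star> m) = degree p"
      and lead: "lead_coeff (monom c e \<star> m) = lead_coeff p"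
      using assms coeff_skew_mult_degree[of "monom c e" m]
      by (simp_all add: degree_skew_mult degree_monom_eq c_def)
    have "p' = 0 \<or> degree p' < degree p"
    proof (rule ccontr)
      assume neg: "\<not> (p' = 0 \<or> degree p' < degree p)"
      moreover have "degree p' \<le> degree p"
        unfolding p'_def using degree_diff_le[of p "degree p" "monom c e \<star> m"] deg by simp
      ultimately have "degree p' = degree p" by simp
      moreover have "coeff p' (degree p) = 0"
        unfolding p'_def using deg lead by simp
      ultimately show False
        using neg by (metis leading_coeff_0_iff)
    qed
    then obtain Q r where "p' = Q \<star> m + r" "r = 0 \<or> degree r < degree m"
      using less[of p'] by (metis add.right_neutral skew_mult_0_left)
    then have "p = (Q + monom c e) \<star> m + r"
      unfolding p'_def by (simp add: skew_mult_add_left algebra_simps)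
    then show ?thesis
      using \<open>r = 0 \<or> degree r < degree m\<close> by blast
  qed
qed

lemma skew_division_unique:
  assumes eq: "Q1 \<star> m + r1 = Q2 \<star> m + r2"
    and r1: "r1 = 0 \<or> degree r1 < degree m" and r2: "r2 = 0 \<or> degree r2 < degree m"
  shows "r1 = r2"
proof (rule ccontr)
  assume "r1 \<noteq> r2"
  have diff: "(Q1 - Q2) \<star> m = r2 - r1"
    using eq by (simp add: skew_mult_diff_left algebra_simps)
  with \<open>r1 \<noteq> r2\<close> have "Q1 - Q2 \<noteq> 0" "m \<noteq> 0"
    by auto
  then have "degree m \<le> degree (r2 - r1)"
    using diff degree_skew_mult[of "Q1 - Q2" m] by simp
  moreover have "degree (r2 - r1) < degree m"
    using r1 r2 \<open>r1 \<noteq> r2\<close> degree_diff_le_max[of r2 r1] by auto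
  ultimately show False by simp
qed

lemma skew_rem_eqI:
  assumes "p = Q \<star> m + r" and "r = 0 \<or> degree r < degree m"
  shows "skew_rem th p m = r"
  unfolding skew_rem_def
proof (rule the_equality)
  show "(r = 0 \<or> degree r < degree m) \<and> (\<exists>Q. p = Q \<star> m + r)"
    using assms by blast
next
  fix r' assume "(r' = 0 \<or> degree r' < degree m) \<and> (\<exists>Q. p = Q \<star> m + r')"
  then show "r' = r"
    using skew_division_unique assms by metis
qed

lemma skew_rem:
  assumes "m \<noteq> 0"
  shows "\<exists>Q. p = Q \<star> m + skew_rem th p m \<and> (skew_rem th p m = 0 \<or> degree (skew_rem th p m) < degree m)"
  using skew_division[OF assms, of p] skew_rem_eqI by metis

lemma skew_mult_eq_smult_if_degree_le:
  assumes "g \<noteq> 0" and "degree (f \<star> g) \<le> degree g"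
  shows "f \<star> g = smult (coeff f 0) g"
proof (cases "f = 0")
  case False
  then have "degree f = 0"
    using degree_skew_mult[OF False assms(1)] assms(2) by simp
  then have "f = [:coeff f 0:]"
    by (metis degree_0_id)
  then show ?thesis
    by (metis const_skew_mult)
qed simp

lemma funpow_th_coeff_proportional:
  assumes "g \<noteq> 0" and th_g: "map_poly th g = smult b g"
  shows "\<exists>\<beta>. \<beta> \<noteq> 0 \<and> (\<forall>l. (th ^^ i) (coeff g l) = \<beta> * coeff g l)"
proof (induction i)
  case 0
  show ?case by (intro exI[of _ 1]) simp
next
  case (Suc i)
  then obtain \<beta> where "\<beta> \<noteq> 0" and \<beta>: "\<forall>l. (th ^^ i) (coeff g l) = \<beta> * coeff g l"
    by blast
  have th_coeff: "th (coeff g l) = b * coeff g l" for l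
    using th_g by (metis coeff_map_poly coeff_smult th_0)
  with \<open>g \<noteq> 0\<close> have "b \<noteq> 0"
    by (metis leading_coeff_0_iff mult_zero_left th_eq_0_iff)
  have "\<forall>l. (th ^^ Suc i) (coeff g l) = (th \<beta> * b) * coeff g l"
    using \<beta> th_coeff by (simp add: th_mult)
  moreover have "th \<beta> * b \<noteq> 0"
    using \<open>\<beta> \<noteq> 0\<close> \<open>b \<noteq> 0\<close> by simp
  ultimately show ?case by blast
qed

section \<open>Skew cyclic codes and their reversal\<close>

definition code_polys :: "nat \<Rightarrow> 'a poly \<Rightarrow> 'a poly set" where
  "code_polys n g = {c. degree c < n \<and> (\<exists>f. c = f \<star> g)}"

lemma skew_code_eq:
  assumes "n \<ge> 1" and X: "monom 1 n - 1 = h \<star> g"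
  shows "skew_code th n g = vec_of n ` code_polys n g"
proof -
  have deg_X: "degree (monom 1 n - 1 :: 'a poly) = n"
    by (rule degree_monom_1_minus_1[OF assms(1)])
  with assms(1) have "monom 1 n - 1 \<noteq> (0 :: 'a poly)"
    by auto
  show ?thesis
  proof (intro equalityI subsetI)
    fix v assume "v \<in> skew_code th n g"
    then obtain f where v: "v = vec_of n (skew_rem th (f \<star> g) (monom 1 n - 1))"
      unfolding skew_code_def by blast
    let ?r = "skew_rem th (f \<star> g) (monom 1 n - 1)"
    obtain Q where Q: "f \<star> g = Q \<star> (monom 1 n - 1) + ?r" "?r = 0 \<or> degree ?r < n"
      using skew_rem[OF \<open>monom 1 n - 1 \<noteq> 0\<close>] deg_X by metis
    have "?r = f \<star> g - Q \<star> (h \<star> g)"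
      using Q(1) unfolding X by (metis add_diff_cancel_left')
    then have "?r = (f - Q \<star> h) \<star> g"
      by (simp add: skew_mult_diff_left skew_mult_assoc)
    moreover have "degree ?r < n"
      using Q(2) assms(1) by auto
    ultimately show "v \<in> vec_of n ` code_polys n g"
      unfolding v code_polys_def by blast
  next
    fix v assume "v \<in> vec_of n ` code_polys n g"
    then obtain f where f: "v = vec_of n (f \<star> g)" "degree (f \<star> g) < n"
      unfolding code_polys_def by blast
    have "skew_rem th (f \<star> g) (monom 1 n - 1) = f \<star> g"
      by (rule skew_rem_eqI[of _ 0]) (use f deg_X in simp_all)
    then show "v \<in> skew_code th n g"
      unfolding skew_code_def f by (metis (mono_tags, lifting) mem_Collect_eq)
  qed
qed

definition skew_reverse :: "nat \<Rightarrow> 'a poly \<Rightarrow> 'a poly" where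
  "skew_reverse n c = Poly (map th (rev (vec_of n c)))"

lemma coeff_skew_reverse:
  "coeff (skew_reverse n c) m = (if m < n then th (coeff c (n - 1 - m)) else 0)"
  by (auto simp: skew_reverse_def nth_default_def vec_of_def rev_nth)

lemma vec_of_skew_reverse: "vec_of n (skew_reverse n c) = map th (rev (vec_of n c))"
  by (rule nth_equalityI) (auto simp: vec_of_def coeff_skew_reverse rev_nth)

lemma degree_skew_reverse_less:
  assumes "n \<ge> 1"
  shows "degree (skew_reverse n c) < n"
proof -
  have "degree (skew_reverse n c) \<le> n - 1"
    by (rule degree_le) (auto simp: coeff_skew_reverse)
  then show ?thesis
    using assms by simp
qed

lemma skew_reverse_0 [simp]: "skew_reverse n 0 = 0"
  by (rule poly_eqI) (simp add: coeff_skew_reverse)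

lemma skew_reverse_add: "skew_reverse n (p + q) = skew_reverse n p + skew_reverse n q"
  by (rule poly_eqI) (simp add: coeff_skew_reverse th_add)

lemma skew_reverse_sum: "skew_reverse n (\<Sum>x\<in>S. f x) = (\<Sum>x\<in>S. skew_reverse n (f x))"
  by (induction S rule: infinite_finite_induct) (simp_all add: skew_reverse_add)

lemma skew_code_reverse_closed_iff:
  assumes "n \<ge> 1" and "monom 1 n - 1 = h \<star> g"
  shows "(\<forall>v\<in>skew_code th n g. map th (rev v) \<in> skew_code th n g)
    \<longleftrightarrow> skew_reverse n ` code_polys n g \<subseteq> code_polys n g"
proof -
  have "vec_of n (skew_reverse n c) \<in> vec_of n ` code_polys n g \<longleftrightarrow> skew_reverse n c \<in> code_polys n g" for c
    by (rule inj_on_image_mem_iff[OF inj_on_vec_of])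
      (auto simp: code_polys_def degree_skew_reverse_less[OF assms(1)])
  then show ?thesis
    by (auto simp: skew_code_eq[OF assms] vec_of_skew_reverse[symmetric])
qed

lemma coeff_skew_reverse_monom_skew_mult:
  assumes "j < n"
  shows "coeff (skew_reverse n (monom a j \<star> p)) m
    = (if m \<le> n - 1 - j then th a * (th ^^ Suc j) (coeff p (n - 1 - j - m)) else 0)"
  using assms by (auto simp: coeff_skew_reverse coeff_monom_skew_mult th_mult diff_diff_left add.commute)

lemma skew_reverse_monom_skew_mult:
  assumes pal: "palindromic g" and "g \<noteq> 0" and th_g: "map_poly th g = smult b g"
    and "j + degree g < n"
  shows "\<exists>e. skew_reverse n (monom a j \<star> g) = monom e (n - 1 - j - degree g) \<star> g"
proof -
  define k where "k = degree g"
  define d where "d = n - 1 - j - k"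
  obtain \<beta>1 where \<beta>1: "\<And>l. (th ^^ Suc j) (coeff g l) = \<beta>1 * coeff g l"
    using funpow_th_coeff_proportional[OF \<open>g \<noteq> 0\<close> th_g] by blast
  obtain \<beta>2 where "\<beta>2 \<noteq> 0" and \<beta>2: "\<And>l. (th ^^ d) (coeff g l) = \<beta>2 * coeff g l"
    using funpow_th_coeff_proportional[OF \<open>g \<noteq> 0\<close> th_g] by blast
  define e where "e = th a * \<beta>1 / \<beta>2"
  have "skew_reverse n (monom a j \<star> g) = monom e d \<star> g"
  proof (rule poly_eqI)
    fix m
    have nj: "n - 1 - j = d + k" "j < n"
      using assms(4) by (simp_all add: d_def k_def)
    have reflect: "(if m \<le> d + k then coeff g (d + k - m) else 0) = (if d \<le> m then coeff g (m - d) else 0)"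
    proof -
      consider "m < d" | "d \<le> m" "m \<le> d + k" | "d + k < m"
        by linarith
      then show ?thesis
      proof cases
        case 2
        then have "d + k - m \<le> degree g" "degree g - (d + k - m) = m - d"
          by (simp_all add: k_def)
        moreover have "coeff g i = coeff g (degree g - i)" if "i \<le> degree g" for i
          using pal that unfolding palindromic_def by blast
        ultimately show ?thesis
          using 2 by metis
      qed (simp_all add: coeff_eq_0 k_def)
    qed
    have "coeff (skew_reverse n (monom a j \<star> g)) m
        = th a * \<beta>1 * (if m \<le> d + k then coeff g (d + k - m) else 0)"
      unfolding coeff_skew_reverse_monom_skew_mult[OF nj(2)] nj(1) \<beta>1 by simp
    also have "\<dots> = th a * \<beta>1 * (if d \<le> m then coeff g (m - d) else 0)"
      by (simp only: reflect)
    also have "\<dots> = coeff (monom e d \<star> g) m"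
      using \<open>\<beta>2 \<noteq> 0\<close> by (simp add: coeff_monom_skew_mult \<beta>2 e_def)
    finally show "coeff (skew_reverse n (monom a j \<star> g)) m = coeff (monom e d \<star> g) m" .
  qed
  then show ?thesis
    unfolding d_def k_def by blast
qed

lemma skew_reverse_left_multiple:
  assumes "palindromic g" and "g \<noteq> 0" and "map_poly th g = smult b g"
    and "degree (f \<star> g) < n"
  shows "\<exists>f'. skew_reverse n (f \<star> g) = f' \<star> g"
proof (cases "f = 0")
  case False
  then have "degree f + degree g < n"
    using degree_skew_mult[OF False \<open>g \<noteq> 0\<close>] assms(4) by simp
  then have "\<forall>i\<in>{..degree f}. \<exists>e. skew_reverse n (monom (coeff f i) i \<star> g)
      = monom e (n - 1 - i - degree g) \<star> g"
    using skew_reverse_monom_skew_mult[OF assms(1-3)] by auto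
  then obtain E where E: "\<forall>i\<in>{..degree f}. skew_reverse n (monom (coeff f i) i \<star> g)
      = monom (E i) (n - 1 - i - degree g) \<star> g"
    by metis
  have "skew_reverse n (f \<star> g) = skew_reverse n ((\<Sum>i\<le>degree f. monom (coeff f i) i) \<star> g)"
    by (simp only: poly_as_sum_of_monoms)
  also have "\<dots> = (\<Sum>i\<le>degree f. skew_reverse n (monom (coeff f i) i \<star> g))"
    by (simp only: skew_mult_sum_left skew_reverse_sum)
  also have "\<dots> = (\<Sum>i\<le>degree f. monom (E i) (n - 1 - i - degree g)) \<star> g"
    using E by (simp add: skew_mult_sum_left)
  finally show ?thesis by blast
qed (auto intro: exI[of _ 0])

lemma skew_reverse_closed_imp_reflect:
  assumes "g \<noteq> 0" and th_g: "map_poly th g = smult b g" and "degree g < n"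
    and closed: "skew_reverse n ` code_polys n g \<subseteq> code_polys n g"
  shows "\<exists>e. \<forall>m\<le>degree g. coeff g (degree g - m) = e * coeff g m"
proof -
  define k where "k = degree g"
  define A where "A = n - 1 - k"
  have nA: "n - 1 - A = k" "A < n"
    using assms(3) by (simp_all add: A_def k_def)
  have "degree (monom 1 A \<star> g) < n"
    using assms(1,3) by (simp add: degree_skew_mult degree_monom_eq A_def k_def)
  then have "skew_reverse n (monom 1 A \<star> g) \<in> code_polys n g"
    using closed unfolding code_polys_def by blast
  then obtain f where f: "skew_reverse n (monom 1 A \<star> g) = f \<star> g"
    unfolding code_polys_def by blast
  have coeff_rev: "coeff (f \<star> g) m = (if m \<le> k then (th ^^ Suc A) (coeff g (k - m)) else 0)" for m
    using coeff_skew_reverse_monom_skew_mult[OF nA(2), of 1 g m] unfolding f nA(1) th_1 by simp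
  have "degree (f \<star> g) \<le> degree g"
    by (rule degree_le) (simp add: coeff_rev k_def)
  then have scalar: "f \<star> g = smult (coeff f 0) g"
    by (rule skew_mult_eq_smult_if_degree_le[OF assms(1)])
  obtain \<beta> where "\<beta> \<noteq> 0" and \<beta>: "\<And>l. (th ^^ Suc A) (coeff g l) = \<beta> * coeff g l"
    using funpow_th_coeff_proportional[OF assms(1) th_g] by blast
  have "coeff g (k - m) = coeff f 0 / \<beta> * coeff g m" if "m \<le> k" for m
    using coeff_rev[of m] that \<open>\<beta> \<noteq> 0\<close> unfolding scalar \<beta> by (simp add: field_simps)
  then show ?thesis
    unfolding k_def by blast
qed

lemma palindromic_if_degree_eq:
  assumes "CHAR('a) = 2" and "n \<ge> 1" and X: "monom 1 n - 1 = h \<star> g" and "degree g = n"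
  shows "palindromic g"
proof -
  have deg_X: "degree (monom 1 n - 1 :: 'a poly) = n"
    by (rule degree_monom_1_minus_1[OF assms(2)])
  with assms(2) X have "h \<noteq> 0" "g \<noteq> 0"
    by (auto simp: skew_mult_eq_0_iff)
  then have "degree h = 0"
    using X deg_X degree_skew_mult assms(4) by simp
  then have "h = [:coeff h 0:]"
    by (metis degree_0_id)
  with \<open>h \<noteq> 0\<close> have "coeff h 0 \<noteq> 0" "monom 1 n - 1 = smult (coeff h 0) g"
    by (metis pCons_0_0, metis X const_skew_mult)
  then have "g = smult (inverse (coeff h 0)) (monom 1 n - 1)"
    by simp
  then show ?thesis
    using palindromic_smult palindromic_monom_1_minus_1[OF assms(1,2)] by metis
qed

end

locale involutive_skew_poly_ring = skew_poly_ring +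
  assumes th_th [simp]: "th (th a) = a"
begin

lemma funpow_th_odd:
  assumes "odd i"
  shows "(th ^^ i) a = th a"
proof -
  have "(th ^^ i) a = (if odd i then th a else a)"
    by (induction i) simp_all
  with assms show ?thesis by simp
qed

lemma monom_skew_mult_odd: "odd n \<Longrightarrow> monom 1 n \<star> p = map_poly th p \<star> monom 1 n"
  by (rule poly_eqI)
    (simp add: coeff_monom_skew_mult coeff_skew_mult_monom_1 coeff_map_poly funpow_th_odd)

lemma map_poly_th_right_divisor_eq_smult:
  assumes "odd n" and X: "monom 1 n - 1 = h \<star> g" and "g \<noteq> 0"
  shows "\<exists>b. map_poly th g = smult b g"
proof -
  let ?g' = "map_poly th g"
  define q where "q = monom 1 n - ?g' \<star> h"
  have "?g' \<star> (h \<star> g) = monom 1 n \<star> g - ?g'"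
    unfolding X[symmetric] by (simp add: skew_mult_diff_right monom_skew_mult_odd[OF assms(1)])
  then have "q \<star> g = ?g'"
    by (simp add: q_def skew_mult_diff_left skew_mult_assoc)
  moreover have "degree ?g' = degree g"
    by (rule degree_map_poly) (simp add: \<open>g \<noteq> 0\<close>)
  ultimately have "?g' = smult (coeff q 0) g"
    using skew_mult_eq_smult_if_degree_le[OF assms(3), of q] by simp
  then show ?thesis by blast
qed

lemma code_polys_reverse_closed_iff_palindromic:
  assumes "CHAR('a) = 2" and "odd n" and X: "monom 1 n - 1 = h \<star> g"
  shows "skew_reverse n ` code_polys n g \<subseteq> code_polys n g \<longleftrightarrow> palindromic g"
proof -
  have "n \<ge> 1"
    using \<open>odd n\<close> by (simp add: odd_pos Suc_le_eq)
  have deg_X: "degree (monom 1 n - 1 :: 'a poly) = n"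
    by (rule degree_monom_1_minus_1[OF \<open>n \<ge> 1\<close>])
  with \<open>n \<ge> 1\<close> X have "h \<noteq> 0" "g \<noteq> 0"
    by (auto simp: skew_mult_eq_0_iff)
  then have deg_hg: "degree h + degree g = n"
    using X deg_X degree_skew_mult by simp
  obtain b where th_g: "map_poly th g = smult b g"
    using map_poly_th_right_divisor_eq_smult[OF assms(2,3) \<open>g \<noteq> 0\<close>] by blast
  show ?thesis
  proof
    assume closed: "skew_reverse n ` code_polys n g \<subseteq> code_polys n g"
    consider "degree g < n" | "degree g = n"
      using deg_hg by linarith
    then show "palindromic g"
    proof cases
      case 1
      then obtain e where "\<forall>m\<le>degree g. coeff g (degree g - m) = e * coeff g m"
        using skew_reverse_closed_imp_reflect[OF \<open>g \<noteq> 0\<close> th_g _ closed] by blast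
      then show ?thesis
        using palindromicI_CHAR_2[OF assms(1) \<open>g \<noteq> 0\<close>] by blast
    next
      case 2
      then show ?thesis
        by (rule palindromic_if_degree_eq[OF assms(1) \<open>n \<ge> 1\<close> X])
    qed
  next
    assume "palindromic g"
    show "skew_reverse n ` code_polys n g \<subseteq> code_polys n g"
    proof (rule image_subsetI)
      fix c assume "c \<in> code_polys n g"
      then obtain f where "c = f \<star> g" "degree (f \<star> g) < n"
        unfolding code_polys_def by blast
      then obtain f' where "skew_reverse n c = f' \<star> g"
        using skew_reverse_left_multiple[OF \<open>palindromic g\<close> \<open>g \<noteq> 0\<close> th_g] by blast
      then show "skew_reverse n c \<in> code_polys n g"
        unfolding code_polys_def using degree_skew_reverse_less[OF \<open>n \<ge> 1\<close>, of c] by auto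
    qed
  qed
qed

end

section \<open>DNA encodings\<close>

lemma length_dna_phi:
  assumes "\<And>x. length (tau x) = L"
  shows "length (dna_phi tau u) = L * length u"
  using assms by (induction u) (simp_all add: dna_phi_def)

lemma inj_dna_phi:
  assumes "inj tau" and len: "\<And>x. length (tau x) = L" and "L > 0"
  shows "inj (dna_phi tau)"
proof (rule injI)
  fix u v assume eq: "dna_phi tau u = dna_phi tau v"
  then have "length u = length v"
    using length_dna_phi[of tau L, OF len] \<open>L > 0\<close> by (metis mult_left_cancel not_gr0)
  then show "u = v" using eq
  proof (induction u v rule: list_induct2)
    case (Cons x u y v)
    have "tau x @ dna_phi tau u = tau y @ dna_phi tau v"
      using Cons.prems by (simp add: dna_phi_def)
    then have "tau x = tau y" "dna_phi tau u = dna_phi tau v"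
      using len by (simp_all add: append_eq_append_conv)
    then show ?case
      using Cons.IH \<open>inj tau\<close> by (simp add: inj_eq)
  qed simp
qed

lemma rev_dna_phi:
  assumes "\<And>b. tau (th b) = rev (tau b)"
  shows "rev (dna_phi tau v) = dna_phi tau (map th (rev v))"
  unfolding dna_phi_def by (simp add: rev_concat rev_map comp_def assms)

lemma reversible_DNA_code_iff:
  assumes "inj (dna_phi tau)" and "\<And>b. tau (th b) = rev (tau b)"
  shows "reversible_DNA_code tau Cd \<longleftrightarrow> (\<forall>c\<in>Cd. map th (rev c) \<in> Cd)"
  unfolding reversible_DNA_code_def rev_dna_phi[of tau th, OF assms(2)]
  using inj_image_mem_iff[OF assms(1)] by simp

theorem theorem6:
  fixes s n :: nat
    and tau :: "'a::{field,finite} \<Rightarrow> nucleotide list"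
    and h g :: "'a poly"
  defines "th \<equiv> (\<lambda>a::'a. a ^ (4 ^ s))"
  assumes s: "s \<ge> 1"
    and card: "card (UNIV :: 'a set) = 4 ^ (2 * s)"
    and tau_bij: "bij_betw tau UNIV {w. length w = 2 * s}"
    and tau_rev: "\<And>b. tau (b ^ (4 ^ s)) = rev (tau b)"
    and n_odd: "odd n"
    and fact: "monom 1 n - 1 = skew_mult th h g"
  shows "reversible_DNA_code tau (skew_code th n g) \<longleftrightarrow> palindromic g"
proof -
  have char: "CHAR('a) = 2"
    using card by (intro CHAR_eq_2_if_card_power_2[where k = "4 * s"]) (simp add: power_mult)
  have th_add: "th (a + b) = th a + th b" for a b
    unfolding th_def by (rule freshmans_dream'[where n = "2 * s"]) (simp_all add: char power_mult)
  have th_th: "th (th a) = a" for a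
    using power_card_eq_self[of a] card by (simp add: th_def power_mult[symmetric] mult_2 power_add)
  interpret involutive_skew_poly_ring th
    by unfold_locales (fact th_add, simp_all add: th_def power_mult_distrib th_th[unfolded th_def])
  have "inj (dna_phi tau)"
    using tau_bij s by (intro inj_dna_phi[where L = "2 * s"]) (auto simp: bij_betw_def)
  then have "reversible_DNA_code tau (skew_code th n g)
      \<longleftrightarrow> (\<forall>v\<in>skew_code th n g. map th (rev v) \<in> skew_code th n g)"
    by (rule reversible_DNA_code_iff) (simp add: th_def tau_rev)
  also have "\<dots> \<longleftrightarrow> skew_reverse n ` code_polys n g \<subseteq> code_polys n g"
    using n_odd fact by (intro skew_code_reverse_closed_iff) (simp_all add: odd_pos Suc_le_eq)
  also have "\<dots> \<longleftrightarrow> palindromic g"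
    by (rule code_polys_reverse_closed_iff_palindromic[OF char n_odd fact])
  finally show ?thesis .
qed

end
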